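(* Let $P\in\Delta$ and define $Q_0\in\Delta$ by $Q_0(x,y,z)=\frac{P(X=x,Y=y)P(X=x,Z=z)}{P(X=x)}$ if $P(X=x)>0$ and $Q_0(x,y,z)=0$ otherwise. Then $Q_0\in\Delta_P$, and $\widetilde{SI}(X:Y;Z)=0$ if and only if $MI_{Q_0}(Y:Z)=0$.
   Context: $X,Y,Z$ are random variables with finite state spaces $\mathcal X,\mathcal Y,\mathcal Z$. $\Delta$ denotes the set of all probability distributions on $\mathcal X\times\mathcal Y\times\mathcal Z$; $P\in\Delta$ is the joint distribution, and a subscript $Q$ means computed w.r.t. $Q\in\Delta$. $\Delta_P=\{Q\in\Delta: Q(X=x,Y=y)=P(X=x,Y=y)\text{ and }Q(X=x,Z=z)=P(X=x,Z=z)\ \forall x,y,z\}$. $CoI_Q(X;Y;Z)=MI_Q(X:Y)-MI_Q(X:Y|Z)$ and $\widetilde{SI}(X:Y;Z)=\max_{Q\in\Delta_P}CoI_Q(X;Y;Z)$. *)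

theory Defs
  imports Complex_Main
begin

text \<open>Joint distributions on the finite product X x Y x Z, represented as pmfs
  (functions to real). Logarithms are base 2 (the base is irrelevant for the statement).\<close>

definition Delta :: "('x::finite \<times> 'y::finite \<times> 'z::finite \<Rightarrow> real) set" where
  "Delta = {Q. (\<forall>w. 0 \<le> Q w) \<and> (\<Sum>w\<in>UNIV. Q w) = 1}"

definition pX :: "('x::finite \<times> 'y::finite \<times> 'z::finite \<Rightarrow> real) \<Rightarrow> 'x \<Rightarrow> real" where
  "pX Q x = (\<Sum>y\<in>UNIV. \<Sum>z\<in>UNIV. Q (x, y, z))"
definition pY :: "('x::finite \<times> 'y::finite \<times> 'z::finite \<Rightarrow> real) \<Rightarrow> 'y \<Rightarrow> real" where
  "pY Q y = (\<Sum>x\<in>UNIV. \<Sum>z\<in>UNIV. Q (x, y, z))"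
definition pZ :: "('x::finite \<times> 'y::finite \<times> 'z::finite \<Rightarrow> real) \<Rightarrow> 'z \<Rightarrow> real" where
  "pZ Q z = (\<Sum>x\<in>UNIV. \<Sum>y\<in>UNIV. Q (x, y, z))"
definition pXY :: "('x::finite \<times> 'y::finite \<times> 'z::finite \<Rightarrow> real) \<Rightarrow> 'x \<Rightarrow> 'y \<Rightarrow> real" where
  "pXY Q x y = (\<Sum>z\<in>UNIV. Q (x, y, z))"
definition pXZ :: "('x::finite \<times> 'y::finite \<times> 'z::finite \<Rightarrow> real) \<Rightarrow> 'x \<Rightarrow> 'z \<Rightarrow> real" where
  "pXZ Q x z = (\<Sum>y\<in>UNIV. Q (x, y, z))"
definition pYZ :: "('x::finite \<times> 'y::finite \<times> 'z::finite \<Rightarrow> real) \<Rightarrow> 'y \<Rightarrow> 'z \<Rightarrow> real" where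
  "pYZ Q y z = (\<Sum>x\<in>UNIV. Q (x, y, z))"

definition MI_XY :: "('x::finite \<times> 'y::finite \<times> 'z::finite \<Rightarrow> real) \<Rightarrow> real" where
  "MI_XY Q = (\<Sum>x\<in>UNIV. \<Sum>y\<in>UNIV.
     if 0 < pXY Q x y then pXY Q x y * log 2 (pXY Q x y / (pX Q x * pY Q y)) else 0)"

definition MI_YZ :: "('x::finite \<times> 'y::finite \<times> 'z::finite \<Rightarrow> real) \<Rightarrow> real" where
  "MI_YZ Q = (\<Sum>y\<in>UNIV. \<Sum>z\<in>UNIV.
     if 0 < pYZ Q y z then pYZ Q y z * log 2 (pYZ Q y z / (pY Q y * pZ Q z)) else 0)"

definition CMI_XY_Z :: "('x::finite \<times> 'y::finite \<times> 'z::finite \<Rightarrow> real) \<Rightarrow> real" where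
  "CMI_XY_Z Q = (\<Sum>x\<in>UNIV. \<Sum>y\<in>UNIV. \<Sum>z\<in>UNIV.
     if 0 < Q (x, y, z) then Q (x, y, z) * log 2 (Q (x, y, z) * pZ Q z / (pXZ Q x z * pYZ Q y z)) else 0)"

definition CoI :: "('x::finite \<times> 'y::finite \<times> 'z::finite \<Rightarrow> real) \<Rightarrow> real" where
  "CoI Q = MI_XY Q - CMI_XY_Z Q"

definition Delta_P :: "('x::finite \<times> 'y::finite \<times> 'z::finite \<Rightarrow> real) \<Rightarrow> ('x \<times> 'y \<times> 'z \<Rightarrow> real) set" where
  "Delta_P P = {Q \<in> Delta. (\<forall>x y. pXY Q x y = pXY P x y) \<and> (\<forall>x z. pXZ Q x z = pXZ P x z)}"

text \<open>SI-tilde: the maximum of CoI over Delta_P (attained, by compactness; written as Sup).\<close>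
definition SI_tilde :: "('x::finite \<times> 'y::finite \<times> 'z::finite \<Rightarrow> real) \<Rightarrow> real" where
  "SI_tilde P = (SUP Q\<in>Delta_P P. CoI Q)"

definition Q0 :: "('x::finite \<times> 'y::finite \<times> 'z::finite \<Rightarrow> real) \<Rightarrow> ('x \<times> 'y \<times> 'z \<Rightarrow> real)" where
  "Q0 P = (\<lambda>(x, y, z). if 0 < pX P x then pXY P x y * pXZ P x z / pX P x else 0)"

end

theory Submission
  imports Defs
begin

text \<open>Write \<open>R\<^sub>Q(x,y,z) = Q(x,y) Q(x,z) Q(y,z) / (Q(x) Q(y) Q(z))\<close> (\<open>pair_product\<close>).
  Then \<open>CoI\<^sub>Q = \<Sum> Q log (R\<^sub>Q / Q)\<close>, so Gibbs' inequality gives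
  \<open>CoI\<^sub>Q \<le> (\<Sum> R\<^sub>Q - 1) / ln 2\<close>. For \<open>Q \<in> \<Delta>\<^sub>P\<close> every marginal in \<open>R\<^sub>Q\<close> except \<open>Q(y,z)\<close>
  is that of \<open>P\<close>, and \<open>R\<^sub>Q = Q\<^sub>0 \<cdot> Q(y,z) / (P(y) P(z))\<close>. Taking \<open>Q = Q\<^sub>0\<close> yields
  \<open>CoI\<^sub>Q\<^sub>0 = MI\<^sub>Q\<^sub>0(Y:Z) \<ge> 0\<close>, a lower bound for the supremum. If \<open>MI\<^sub>Q\<^sub>0(Y:Z) = 0\<close>,
  then \<open>Q\<^sub>0(y,z) = P(y) P(z)\<close> by the equality case of Gibbs' inequality; summing \<open>R\<^sub>Q\<close> over
  \<open>x\<close> then gives at most \<open>Q(y,z)\<close>, so \<open>\<Sum> R\<^sub>Q \<le> 1\<close> and \<open>CoI\<^sub>Q \<le> 0\<close> on all of \<open>\<Delta>\<^sub>P\<close>.\<close>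

lemma gibbs_term_le:
  fixes q r :: real
  assumes "0 \<le> q" "0 \<le> r" "0 < q \<Longrightarrow> 0 < r"
  shows "(if 0 < q then q * log 2 (r / q) else 0) \<le> (r - q) / ln 2"
proof (cases "0 < q")
  case True
  then have "ln (r / q) \<le> r / q - 1"
    using assms(3) by (intro ln_le_minus_one) simp
  then have "q * ln (r / q) \<le> r - q"
    using True mult_left_mono[of "ln (r / q)" "r / q - 1" q] by (simp add: field_simps)
  then show ?thesis
    using True by (simp add: log_def divide_right_mono)
qed (use assms in simp)

lemma gibbs_term_eq_iff:
  fixes q r :: real
  assumes "0 \<le> q" "0 \<le> r" "0 < q \<Longrightarrow> 0 < r"
  shows "(if 0 < q then q * log 2 (r / q) else 0) = (r - q) / ln 2 \<longleftrightarrow> q = r"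
proof (cases "0 < q")
  case True
  then have "0 < r" using assms(3) by simp
  have "q * log 2 (r / q) = (r - q) / ln 2 \<longleftrightarrow> ln (r / q) = r / q - 1"
    using True by (simp add: log_def field_simps)
  also have "\<dots> \<longleftrightarrow> r / q = 1"
    using True \<open>0 < r\<close> ln_eq_minus_one[of "r / q"] by auto
  finally show ?thesis using True by auto
qed (use assms in auto)

lemma gibbs_inequality:
  fixes q r :: "'a \<Rightarrow> real"
  assumes "finite A" and "\<And>a. a \<in> A \<Longrightarrow> 0 \<le> q a" and "\<And>a. a \<in> A \<Longrightarrow> 0 \<le> r a"
    and "\<And>a. a \<in> A \<Longrightarrow> 0 < q a \<Longrightarrow> 0 < r a"
  shows "(\<Sum>a\<in>A. if 0 < q a then q a * log 2 (r a / q a) else 0) \<le> (sum r A - sum q A) / ln 2"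
proof -
  have "(\<Sum>a\<in>A. if 0 < q a then q a * log 2 (r a / q a) else 0) \<le> (\<Sum>a\<in>A. (r a - q a) / ln 2)"
    using assms by (intro sum_mono gibbs_term_le) auto
  also have "\<dots> = (sum r A - sum q A) / ln 2"
    by (simp add: sum_divide_distrib[symmetric] sum_subtractf)
  finally show ?thesis .
qed

lemma gibbs_inequality_eq_iff:
  fixes q r :: "'a \<Rightarrow> real"
  assumes "finite A" and "\<And>a. a \<in> A \<Longrightarrow> 0 \<le> q a" and "\<And>a. a \<in> A \<Longrightarrow> 0 \<le> r a"
    and "\<And>a. a \<in> A \<Longrightarrow> 0 < q a \<Longrightarrow> 0 < r a"
  shows "(\<Sum>a\<in>A. if 0 < q a then q a * log 2 (r a / q a) else 0) = (sum r A - sum q A) / ln 2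
    \<longleftrightarrow> (\<forall>a\<in>A. q a = r a)"
proof -
  define d where "d a = (r a - q a) / ln 2 - (if 0 < q a then q a * log 2 (r a / q a) else 0)" for a
  have d_nonneg: "0 \<le> d a" if "a \<in> A" for a
    using gibbs_term_le[of "q a" "r a"] assms that by (simp add: d_def)
  have "sum d A = (sum r A - sum q A) / ln 2 - (\<Sum>a\<in>A. if 0 < q a then q a * log 2 (r a / q a) else 0)"
    by (simp add: d_def sum_subtractf sum_divide_distrib[symmetric])
  then have "(\<Sum>a\<in>A. if 0 < q a then q a * log 2 (r a / q a) else 0) = (sum r A - sum q A) / ln 2
      \<longleftrightarrow> sum d A = 0"
    by linarith
  also have "\<dots> \<longleftrightarrow> (\<forall>a\<in>A. d a = 0)"
    using assms(1) d_nonneg by (rule sum_nonneg_eq_0_iff)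
  also have "\<dots> \<longleftrightarrow> (\<forall>a\<in>A. q a = r a)"
  proof (intro ball_cong refl)
    fix a assume "a \<in> A"
    have "d a = 0 \<longleftrightarrow> (if 0 < q a then q a * log 2 (r a / q a) else 0) = (r a - q a) / ln 2"
      by (auto simp: d_def)
    also have "\<dots> \<longleftrightarrow> q a = r a"
      using \<open>a \<in> A\<close> assms by (intro gibbs_term_eq_iff) auto
    finally show "d a = 0 \<longleftrightarrow> q a = r a" .
  qed
  finally show ?thesis .
qed

lemma sum_guarded_mult:
  fixes f :: "'a \<Rightarrow> real"
  assumes "finite A" and "\<And>a. a \<in> A \<Longrightarrow> 0 \<le> f a"
  shows "(if 0 < sum f A then sum f A * c else 0) = (\<Sum>a\<in>A. if 0 < f a then f a * c else 0)"
proof -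
  have "(\<Sum>a\<in>A. if 0 < f a then f a * c else 0) = (\<Sum>a\<in>A. f a * c)"
    using assms(2) by (intro sum.cong) (auto simp: order_le_less)
  moreover have "0 \<le> sum f A"
    using assms(2) by (rule sum_nonneg)
  ultimately show ?thesis by (simp add: sum_distrib_right[symmetric])
qed

lemma sum_UNIV_pair:
  fixes f :: "'a::finite \<times> 'b::finite \<Rightarrow> 'c::comm_monoid_add"
  shows "(\<Sum>w\<in>UNIV. f w) = (\<Sum>a\<in>UNIV. \<Sum>b\<in>UNIV. f (a, b))"
  by (simp add: sum.cartesian_product flip: UNIV_Times_UNIV)

lemma sum_UNIV_triple:
  fixes f :: "'a::finite \<times> 'b::finite \<times> 'c::finite \<Rightarrow> 'd::comm_monoid_add"
  shows "(\<Sum>w\<in>UNIV. f w) = (\<Sum>a\<in>UNIV. \<Sum>b\<in>UNIV. \<Sum>c\<in>UNIV. f (a, b, c))"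
  by (simp add: sum_UNIV_pair)

lemma sum_rotate3:
  "(\<Sum>b\<in>B. \<Sum>c\<in>C. \<Sum>a\<in>A. f a b c) = (\<Sum>a\<in>A. \<Sum>b\<in>B. \<Sum>c\<in>C. f a b c)"
proof -
  have "(\<Sum>b\<in>B. \<Sum>c\<in>C. \<Sum>a\<in>A. f a b c) = (\<Sum>b\<in>B. \<Sum>a\<in>A. \<Sum>c\<in>C. f a b c)"
    by (intro sum.cong refl sum.swap)
  also have "\<dots> = (\<Sum>a\<in>A. \<Sum>b\<in>B. \<Sum>c\<in>C. f a b c)"
    by (rule sum.swap)
  finally show ?thesis .
qed

lemma pX_eq_sum_pXY: "pX Q x = (\<Sum>y\<in>UNIV. pXY Q x y)"
  by (simp add: pX_def pXY_def)

lemma pX_eq_sum_pXZ: "pX Q x = (\<Sum>z\<in>UNIV. pXZ Q x z)"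
  unfolding pX_def pXZ_def by (rule sum.swap)

lemma pY_eq_sum_pXY: "pY Q y = (\<Sum>x\<in>UNIV. pXY Q x y)"
  by (simp add: pY_def pXY_def)

lemma pY_eq_sum_pYZ: "pY Q y = (\<Sum>z\<in>UNIV. pYZ Q y z)"
  unfolding pY_def pYZ_def by (rule sum.swap)

lemma pZ_eq_sum_pXZ: "pZ Q z = (\<Sum>x\<in>UNIV. pXZ Q x z)"
  by (simp add: pZ_def pXZ_def)

lemma pZ_eq_sum_pYZ: "pZ Q z = (\<Sum>y\<in>UNIV. pYZ Q y z)"
  unfolding pZ_def pYZ_def by (rule sum.swap)

lemma marginals_nonneg:
  assumes "\<And>w. 0 \<le> Q w"
  shows "0 \<le> pXY Q x y" "0 \<le> pXZ Q x z" "0 \<le> pYZ Q y z" "0 \<le> pX Q x" "0 \<le> pY Q y" "0 \<le> pZ Q z"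
  unfolding pXY_def pXZ_def pYZ_def pX_def pY_def pZ_def by (auto intro!: sum_nonneg assms)

lemma Q_le_pair_marginals:
  assumes "\<And>w. 0 \<le> Q w"
  shows "Q (x, y, z) \<le> pXY Q x y" "Q (x, y, z) \<le> pXZ Q x z" "Q (x, y, z) \<le> pYZ Q y z"
  unfolding pXY_def pXZ_def pYZ_def by (auto intro!: member_le_sum assms)

lemma pair_marginals_le_marginals:
  assumes "\<And>w. 0 \<le> Q w"
  shows "pXY Q x y \<le> pX Q x" "pXY Q x y \<le> pY Q y" "pXZ Q x z \<le> pX Q x"
    "pXZ Q x z \<le> pZ Q z" "pYZ Q y z \<le> pY Q y" "pYZ Q y z \<le> pZ Q z"
proof -
  have nonneg: "0 \<le> pXY Q x' y'" "0 \<le> pXZ Q x' z'" "0 \<le> pYZ Q y' z'" for x' y' z'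
    using marginals_nonneg[where Q=Q] assms by blast+
  show "pXY Q x y \<le> pX Q x"
    unfolding pX_eq_sum_pXY by (rule member_le_sum) (use nonneg in auto)
  show "pXY Q x y \<le> pY Q y"
    unfolding pY_eq_sum_pXY by (rule member_le_sum) (use nonneg in auto)
  show "pXZ Q x z \<le> pX Q x"
    unfolding pX_eq_sum_pXZ by (rule member_le_sum) (use nonneg in auto)
  show "pXZ Q x z \<le> pZ Q z"
    unfolding pZ_eq_sum_pXZ by (rule member_le_sum) (use nonneg in auto)
  show "pYZ Q y z \<le> pY Q y"
    unfolding pY_eq_sum_pYZ by (rule member_le_sum) (use nonneg in auto)
  show "pYZ Q y z \<le> pZ Q z"
    unfolding pZ_eq_sum_pYZ by (rule member_le_sum) (use nonneg in auto)
qed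

lemma marginals_pos:
  assumes "\<And>w. 0 \<le> Q w" and "0 < Q (x, y, z)"
  shows "0 < pXY Q x y" "0 < pXZ Q x z" "0 < pYZ Q y z" "0 < pX Q x" "0 < pY Q y" "0 < pZ Q z"
  using assms Q_le_pair_marginals[where Q=Q] pair_marginals_le_marginals[where Q=Q]
  by (meson less_le_trans)+

lemma Delta_nonneg: "Q \<in> Delta \<Longrightarrow> 0 \<le> Q w"
  by (cases w) (simp add: Delta_def)

lemma sum_pYZ_eq_1:
  assumes "Q \<in> Delta"
  shows "(\<Sum>y\<in>UNIV. \<Sum>z\<in>UNIV. pYZ Q y z) = 1"
proof -
  have "(\<Sum>y\<in>UNIV. \<Sum>z\<in>UNIV. pYZ Q y z) = (\<Sum>w\<in>UNIV. Q w)"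
    unfolding pYZ_def sum_UNIV_triple by (rule sum_rotate3)
  then show ?thesis using assms by (simp add: Delta_def)
qed

lemma Delta_P_marginals:
  assumes "Q \<in> Delta_P P"
  shows "Q \<in> Delta" "pXY Q = pXY P" "pXZ Q = pXZ P" "pX Q = pX P" "pY Q = pY P" "pZ Q = pZ P"
  using assms
  by (auto simp: Delta_P_def fun_eq_iff pX_eq_sum_pXY pY_eq_sum_pXY pZ_eq_sum_pXZ)

definition pair_product ::
    "('x::finite \<times> 'y::finite \<times> 'z::finite \<Rightarrow> real) \<Rightarrow> 'x \<times> 'y \<times> 'z \<Rightarrow> real" where
  "pair_product Q = (\<lambda>(x, y, z). pXY Q x y * pXZ Q x z * pYZ Q y z / (pX Q x * pY Q y * pZ Q z))"

lemma pair_product_nonneg: "(\<And>w. 0 \<le> Q w) \<Longrightarrow> 0 \<le> pair_product Q w"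
  by (cases w) (simp add: pair_product_def marginals_nonneg)

lemma pair_product_pos: "(\<And>w. 0 \<le> Q w) \<Longrightarrow> 0 < Q w \<Longrightarrow> 0 < pair_product Q w"
  by (cases w) (simp add: pair_product_def marginals_pos)

lemma pair_product_le_1:
  assumes "\<And>w. 0 \<le> Q w"
  shows "pair_product Q w \<le> 1"
proof -
  obtain x y z where w: "w = (x, y, z)" by (cases w)
  have ratio_le_1: "a / b \<le> 1" if "0 \<le> a" "a \<le> b" for a b :: real
    using that by (cases "b = 0") (auto simp: divide_le_eq_1)
  have "pair_product Q w = (pXY Q x y / pX Q x) * (pXZ Q x z / pZ Q z) * (pYZ Q y z / pY Q y)"
    by (simp add: w pair_product_def)
  also have "\<dots> \<le> 1"
    using marginals_nonneg[where Q=Q] pair_marginals_le_marginals[where Q=Q] assms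
    by (intro mult_le_one ratio_le_1 mult_nonneg_nonneg divide_nonneg_nonneg) auto
  finally show ?thesis .
qed

lemma MI_XY_eq_sum:
  assumes "\<And>w. 0 \<le> Q w"
  shows "MI_XY Q = (\<Sum>x\<in>UNIV. \<Sum>y\<in>UNIV. \<Sum>z\<in>UNIV.
    if 0 < Q (x, y, z) then Q (x, y, z) * log 2 (pXY Q x y / (pX Q x * pY Q y)) else 0)"
  unfolding MI_XY_def
  by (intro sum.cong refl, subst (1 2) pXY_def, rule sum_guarded_mult) (auto simp: assms)

lemma MI_YZ_eq_sum:
  assumes "\<And>w. 0 \<le> Q w"
  shows "MI_YZ Q = (\<Sum>x\<in>UNIV. \<Sum>y\<in>UNIV. \<Sum>z\<in>UNIV.
    if 0 < Q (x, y, z) then Q (x, y, z) * log 2 (pYZ Q y z / (pY Q y * pZ Q z)) else 0)"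
proof -
  have "MI_YZ Q = (\<Sum>y\<in>UNIV. \<Sum>z\<in>UNIV. \<Sum>x\<in>UNIV.
    if 0 < Q (x, y, z) then Q (x, y, z) * log 2 (pYZ Q y z / (pY Q y * pZ Q z)) else 0)"
    unfolding MI_YZ_def
    by (intro sum.cong refl, subst (1 2) pYZ_def, rule sum_guarded_mult) (auto simp: assms)
  then show ?thesis by (subst (asm) sum_rotate3)
qed

lemma CoI_eq_sum:
  assumes "\<And>w. 0 \<le> Q w"
  shows "CoI Q = (\<Sum>x\<in>UNIV. \<Sum>y\<in>UNIV. \<Sum>z\<in>UNIV.
    if 0 < Q (x, y, z) then Q (x, y, z) * log 2 (pair_product Q (x, y, z) / Q (x, y, z)) else 0)"
proof -
  have "log 2 (pXY Q x y / (pX Q x * pY Q y)) - log 2 (Q (x, y, z) * pZ Q z / (pXZ Q x z * pYZ Q y z))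
      = log 2 (pair_product Q (x, y, z) / Q (x, y, z))" if "0 < Q (x, y, z)" for x y z
    using marginals_pos[of Q, OF assms that] that by (simp add: pair_product_def log_mult log_divide)
  then show ?thesis
    unfolding CoI_def MI_XY_eq_sum[OF assms] CMI_XY_Z_def sum_subtractf[symmetric]
    by (intro sum.cong refl) (simp add: right_diff_distrib[symmetric])
qed

lemma CoI_le_pair_product:
  assumes "Q \<in> Delta"
  shows "CoI Q \<le> (sum (pair_product Q) UNIV - 1) / ln 2"
proof -
  have nonneg: "\<And>w. 0 \<le> Q w" using assms by (rule Delta_nonneg)
  have "CoI Q = (\<Sum>w\<in>UNIV. if 0 < Q w then Q w * log 2 (pair_product Q w / Q w) else 0)"
    unfolding CoI_eq_sum[OF nonneg] sum_UNIV_triple ..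
  also have "\<dots> \<le> (sum (pair_product Q) UNIV - sum Q UNIV) / ln 2"
    by (rule gibbs_inequality) (auto simp: nonneg pair_product_nonneg pair_product_pos)
  also have "sum Q UNIV = 1" using assms by (simp add: Delta_def)
  finally show ?thesis .
qed

lemma bdd_above_CoI: "bdd_above (CoI ` (Delta :: ('x::finite \<times> 'y::finite \<times> 'z::finite \<Rightarrow> real) set))"
proof (rule bdd_aboveI2)
  fix Q :: "'x \<times> 'y \<times> 'z \<Rightarrow> real"
  assume Q: "Q \<in> Delta"
  let ?n = "real (card (UNIV :: ('x \<times> 'y \<times> 'z) set))"
  have "sum (pair_product Q) UNIV \<le> ?n * 1"
    by (intro sum_bounded_above pair_product_le_1 Delta_nonneg[OF Q])
  then have "(sum (pair_product Q) UNIV - 1) / ln 2 \<le> (?n - 1) / ln 2"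
    by (intro divide_right_mono) auto
  then show "CoI Q \<le> (?n - 1) / ln 2"
    using CoI_le_pair_product[OF Q] by linarith
qed

definition prod_marginals_YZ ::
    "('x::finite \<times> 'y::finite \<times> 'z::finite \<Rightarrow> real) \<Rightarrow> 'y \<times> 'z \<Rightarrow> real" where
  "prod_marginals_YZ Q = (\<lambda>(y, z). pY Q y * pZ Q z)"

lemma MI_YZ_eq_neg_sum:
  "MI_YZ Q = - (\<Sum>w\<in>UNIV. if 0 < case_prod (pYZ Q) w
     then case_prod (pYZ Q) w * log 2 (prod_marginals_YZ Q w / case_prod (pYZ Q) w) else 0)"
proof -
  have log_flip: "log 2 (a / b) = - log 2 (b / a)" for a b :: real
    by (metis inverse_divide log_inverse)
  show ?thesis
    unfolding MI_YZ_def sum_UNIV_pair sum_negf[symmetric]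
    by (intro sum.cong refl) (simp add: prod_marginals_YZ_def log_flip[of "pYZ Q _ _"])
qed

lemma sum_prod_marginals_YZ:
  assumes "Q \<in> Delta"
  shows "sum (case_prod (pYZ Q)) UNIV = 1" "sum (prod_marginals_YZ Q) UNIV = 1"
proof -
  show "sum (case_prod (pYZ Q)) UNIV = 1"
    using sum_pYZ_eq_1[OF assms] by (simp add: sum_UNIV_pair)
  have "(\<Sum>y\<in>UNIV. pY Q y) = 1"
    using sum_pYZ_eq_1[OF assms] by (simp add: pY_eq_sum_pYZ)
  moreover have "(\<Sum>z\<in>UNIV. pZ Q z) = 1"
    using sum_pYZ_eq_1[OF assms] unfolding pZ_eq_sum_pYZ by (subst sum.swap)
  ultimately show "sum (prod_marginals_YZ Q) UNIV = 1"
    by (simp add: prod_marginals_YZ_def sum_UNIV_pair flip: sum_product)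
qed

lemma MI_YZ_gibbs_conditions:
  assumes "Q \<in> Delta"
  shows "0 \<le> case_prod (pYZ Q) w" "0 \<le> prod_marginals_YZ Q w"
    "0 < case_prod (pYZ Q) w \<Longrightarrow> 0 < prod_marginals_YZ Q w"
proof -
  obtain y z where w: "w = (y, z)" by (cases w)
  have nonneg: "\<And>w. 0 \<le> Q w" using assms by (rule Delta_nonneg)
  have "pYZ Q y z \<le> pY Q y" "pYZ Q y z \<le> pZ Q z"
    using pair_marginals_le_marginals[of Q, OF nonneg] by blast+
  then show "0 \<le> case_prod (pYZ Q) w" "0 \<le> prod_marginals_YZ Q w"
    "0 < case_prod (pYZ Q) w \<Longrightarrow> 0 < prod_marginals_YZ Q w"
    using marginals_nonneg[of Q, OF nonneg] by (simp_all add: w prod_marginals_YZ_def)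
qed

lemma MI_YZ_nonneg:
  assumes "Q \<in> Delta"
  shows "0 \<le> MI_YZ Q"
proof -
  have "- MI_YZ Q \<le> (sum (prod_marginals_YZ Q) UNIV - sum (case_prod (pYZ Q)) UNIV) / ln 2"
    unfolding MI_YZ_eq_neg_sum minus_minus
    by (rule gibbs_inequality) (use MI_YZ_gibbs_conditions[OF assms] in auto)
  then show ?thesis by (simp add: sum_prod_marginals_YZ[OF assms])
qed

lemma MI_YZ_eq_0_iff:
  assumes "Q \<in> Delta"
  shows "MI_YZ Q = 0 \<longleftrightarrow> (\<forall>y z. pYZ Q y z = pY Q y * pZ Q z)"
proof -
  have "MI_YZ Q = 0 \<longleftrightarrow>
      - MI_YZ Q = (sum (prod_marginals_YZ Q) UNIV - sum (case_prod (pYZ Q)) UNIV) / ln 2"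
    by (simp add: sum_prod_marginals_YZ[OF assms])
  also have "\<dots> \<longleftrightarrow> (\<forall>w\<in>UNIV. case_prod (pYZ Q) w = prod_marginals_YZ Q w)"
    unfolding MI_YZ_eq_neg_sum minus_minus
    by (rule gibbs_inequality_eq_iff) (use MI_YZ_gibbs_conditions[OF assms] in auto)
  finally show ?thesis by (simp add: prod_marginals_YZ_def)
qed

text \<open>The guard in \<open>Q0\<close> is redundant, since \<open>pX P x \<ge> 0\<close> and \<open>a / 0 = 0\<close>.\<close>

lemma Q0_apply:
  assumes "P \<in> Delta"
  shows "Q0 P (x, y, z) = pXY P x y * pXZ P x z / pX P x"
proof -
  have "0 \<le> pX P x" using marginals_nonneg(4)[of P, OF Delta_nonneg[OF assms]] .
  then show ?thesis by (auto simp: Q0_def)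
qed

lemma Q0_in_Delta_P:
  assumes "P \<in> Delta"
  shows "Q0 P \<in> Delta_P P"
proof -
  have nonneg: "\<And>w. 0 \<le> P w" using assms by (rule Delta_nonneg)
  note marg_nonneg = marginals_nonneg[of P, OF nonneg]
    and marg_le = pair_marginals_le_marginals[of P, OF nonneg]
  have cancel: "a * pX P x / pX P x = a" if "0 \<le> a" "a \<le> pX P x" for a x
    using that by (cases "pX P x = 0") auto
  have XY: "pXY (Q0 P) x y = pXY P x y" for x y
  proof -
    have "pXY (Q0 P) x y = pXY P x y * pX P x / pX P x"
      by (simp add: pXY_def[of "Q0 P"] Q0_apply[OF assms] pX_eq_sum_pXZ sum_distrib_left
          flip: sum_divide_distrib)
    also have "\<dots> = pXY P x y" using cancel marg_nonneg marg_le by blast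
    finally show ?thesis .
  qed
  have XZ: "pXZ (Q0 P) x z = pXZ P x z" for x z
  proof -
    have "pXZ (Q0 P) x z = pXZ P x z * pX P x / pX P x"
      unfolding pXZ_def[of "Q0 P"] Q0_apply[OF assms] pX_eq_sum_pXY[of P x]
      by (simp add: sum_distrib_left sum_divide_distrib mult.commute)
    also have "\<dots> = pXZ P x z" using cancel marg_nonneg marg_le by blast
    finally show ?thesis .
  qed
  have "sum (Q0 P) UNIV = sum P UNIV"
    using XY by (simp add: sum_UNIV_triple flip: pXY_def)
  moreover have "0 \<le> Q0 P w" for w
    using marg_nonneg by (cases w) (simp add: Q0_apply[OF assms])
  ultimately have "Q0 P \<in> Delta" using assms by (simp add: Delta_def)
  then show ?thesis using XY XZ by (simp add: Delta_P_def)
qed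

lemma pair_product_eq_Q0_mult:
  assumes "P \<in> Delta" and "Q \<in> Delta_P P"
  shows "pair_product Q (x, y, z) = Q0 P (x, y, z) * (pYZ Q y z / (pY P y * pZ P z))"
  using Delta_P_marginals[OF assms(2)]
  by (simp add: pair_product_def Q0_apply[OF assms(1)] divide_inverse inverse_mult_distrib mult_ac)

lemma CoI_Q0_eq_MI_YZ:
  assumes "P \<in> Delta"
  shows "CoI (Q0 P) = MI_YZ (Q0 P)"
proof -
  have Q0: "Q0 P \<in> Delta_P P" using assms by (rule Q0_in_Delta_P)
  have nonneg: "\<And>w. 0 \<le> Q0 P w" using Delta_P_marginals(1)[OF Q0] by (rule Delta_nonneg)
  show ?thesis
    unfolding CoI_eq_sum[OF nonneg] MI_YZ_eq_sum[OF nonneg]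
    by (intro sum.cong refl) (auto simp: pair_product_eq_Q0_mult[OF assms Q0] Delta_P_marginals[OF Q0])
qed

lemma CoI_nonpos_if_Q0_indep:
  assumes P: "P \<in> Delta" and indep: "\<forall>y z. pYZ (Q0 P) y z = pY P y * pZ P z"
    and Q: "Q \<in> Delta_P P"
  shows "CoI Q \<le> 0"
proof -
  have Q_Delta: "Q \<in> Delta" using Q by (rule Delta_P_marginals(1))
  have inner: "(\<Sum>x\<in>UNIV. pair_product Q (x, y, z)) \<le> pYZ Q y z" for y z
  proof -
    have "(\<Sum>x\<in>UNIV. pair_product Q (x, y, z)) = pYZ (Q0 P) y z * (pYZ Q y z / (pY P y * pZ P z))"
      unfolding pYZ_def[of "Q0 P"] pair_product_eq_Q0_mult[OF P Q] by (rule sum_distrib_right[symmetric])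
    also have "\<dots> = pY P y * pZ P z * (pYZ Q y z / (pY P y * pZ P z))"
      using indep by simp
    also have "\<dots> \<le> pYZ Q y z"
      using marginals_nonneg(3)[of Q, OF Delta_nonneg[OF Q_Delta]] by (cases "pY P y * pZ P z = 0") auto
    finally show ?thesis .
  qed
  have "sum (pair_product Q) UNIV = (\<Sum>y\<in>UNIV. \<Sum>z\<in>UNIV. \<Sum>x\<in>UNIV. pair_product Q (x, y, z))"
    unfolding sum_UNIV_triple by (rule sum_rotate3[symmetric])
  also have "\<dots> \<le> (\<Sum>y\<in>UNIV. \<Sum>z\<in>UNIV. pYZ Q y z)"
    by (intro sum_mono inner)
  also have "\<dots> = 1"
    using Q_Delta by (rule sum_pYZ_eq_1)
  finally have "(sum (pair_product Q) UNIV - 1) / ln 2 \<le> 0"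
    by (simp add: divide_nonpos_pos)
  then show ?thesis using CoI_le_pair_product[OF Q_Delta] by linarith
qed

theorem mainTheorem6:
  fixes P :: "'x::finite \<times> 'y::finite \<times> 'z::finite \<Rightarrow> real"
  assumes "P \<in> Delta"
  shows "Q0 P \<in> Delta_P P \<and> (SI_tilde P = 0 \<longleftrightarrow> MI_YZ (Q0 P) = 0)"
proof -
  have Q0: "Q0 P \<in> Delta_P P" using assms by (rule Q0_in_Delta_P)
  have Q0_Delta: "Q0 P \<in> Delta" using Q0 by (rule Delta_P_marginals(1))
  have bdd: "bdd_above (CoI ` Delta_P P)"
    by (rule bdd_above_mono[OF bdd_above_CoI]) (auto simp: Delta_P_def)
  have lower: "MI_YZ (Q0 P) \<le> SI_tilde P"
    unfolding SI_tilde_def CoI_Q0_eq_MI_YZ[OF assms, symmetric] using Q0 bdd by (rule cSUP_upper)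
  have upper: "SI_tilde P \<le> 0" if "MI_YZ (Q0 P) = 0"
  proof -
    have "\<forall>y z. pYZ (Q0 P) y z = pY P y * pZ P z"
      using that MI_YZ_eq_0_iff[OF Q0_Delta] Delta_P_marginals[OF Q0] by simp
    then show ?thesis
      unfolding SI_tilde_def using Q0 by (intro cSUP_least CoI_nonpos_if_Q0_indep[OF assms]) auto
  qed
  show ?thesis using Q0 lower upper MI_YZ_nonneg[OF Q0_Delta] by linarith
qed

end
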